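(* Let $q$ be a prime power, $m\ge1$, and let $\mathcal{A}=\{\alpha^{[0]},\alpha^{[1]},\dots,\alpha^{[m-1]}\}$ be a normal basis of $\mathbb{F}_{q^m}$ over $\mathbb{F}_q$ with dual basis $\mathcal{A}'=\{\alpha'_0,\dots,\alpha'_{m-1}\}$. Let $\mathcal{B}$ be any ordered basis of $\mathbb{F}_{q^m}$ over $\mathbb{F}_q$. Let $f(x)=\sum_{i=0}^{m-1}f_ix^{[i]}$ be a $q$-polynomial over $\mathbb{F}_{q^m}$, and let $F=(F_0,\dots,F_{m-1})^T\in\mathbb{F}_{q^m}^m$ be such that $[F]_{\mathcal{B}}=[f(x)]_{\mathcal{A}}^{\mathcal{B}}$. Writing $F(x)=\sum_{j=0}^{m-1}F_jx^{[j]}$, we have $f_i=F(\alpha'_i)$ for $i=0,\dots,m-1$. In particular, for any ordered basis $\Theta$ of $\mathbb{F}_{q^m}$ over $\mathbb{F}_q$, $[f]_\Theta=[F(x)]_{\mathcal{A}'}^{\Theta}$, where $f=(f_0,\dots,f_{m-1})^T$.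
   Context: $x^{[i]}$ denotes $x^{q^i}$. A normal basis is a basis of the form $\{\alpha^{[0]},\dots,\alpha^{[m-1]}\}$. The dual basis $\{\alpha'_j\}$ of a basis $\{\alpha_i\}$ satisfies $\mathrm{Tr}(\alpha_i\alpha'_j)=\delta_{ij}$, where $\mathrm{Tr}(x)=\sum_{\ell=0}^{m-1}x^{[\ell]}$. For $a\in\mathbb{F}_{q^m}$ and an ordered basis $\mathcal{B}=\{\beta_0,\dots,\beta_{m-1}\}$, $[a]_{\mathcal{B}}\in\mathbb{F}_q^{1\times m}$ is the row vector of coordinates of $a$ with respect to $\mathcal{B}$; for a vector $v\in\mathbb{F}_{q^m}^m$, $[v]_{\mathcal{B}}\in\mathbb{F}_q^{m\times m}$ is the matrix whose $i$th row is $[v_i]_{\mathcal{B}}$. For an $\mathbb{F}_q$-linear map $T$ on $\mathbb{F}_{q^m}$ and ordered bases $\mathcal{A}=\{\alpha_i\}$, $\mathcal{B}=\{\beta_j\}$, $[T]_{\mathcal{A}}^{\mathcal{B}}$ is the matrix over $\mathbb{F}_q$ with $T(\alpha_i)=\sum_j([T]_{\mathcal{A}}^{\mathcal{B}})_{ij}\beta_j$. A $q$-polynomial is viewed as the linear map given by evaluation. Indices start at 0. *)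

theory Defs
  imports "HOL-Computational_Algebra.Primes"
begin

text \<open>Setting: the type 'a is the finite field F_{q^m}; the base field F_q is realised
  inside it as the set of fixed points of the q-Frobenius x \<mapsto> x^q.
  Frobenius power x^[i] is x ^ (q ^ i).\<close>

definition Fq :: "nat \<Rightarrow> 'a::{field,finite} set" where
  "Fq q = {x. x ^ q = x}"

definition frob :: "nat \<Rightarrow> 'a::{field,finite} \<Rightarrow> nat \<Rightarrow> 'a" where
  "frob q x i = x ^ (q ^ i)"

definition trace :: "nat \<Rightarrow> nat \<Rightarrow> 'a::{field,finite} \<Rightarrow> 'a" where
  "trace q m x = (\<Sum>l<m. frob q x l)"

definition is_basis :: "nat \<Rightarrow> nat \<Rightarrow> (nat \<Rightarrow> 'a::{field,finite}) \<Rightarrow> bool" where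
  "is_basis q m b \<longleftrightarrow>
     (\<forall>a. \<exists>!c. (\<forall>i<m. c i \<in> Fq q) \<and> (\<forall>i\<ge>m. c i = 0) \<and> a = (\<Sum>i<m. c i * b i))"

definition coord :: "nat \<Rightarrow> nat \<Rightarrow> (nat \<Rightarrow> 'a::{field,finite}) \<Rightarrow> 'a \<Rightarrow> nat \<Rightarrow> 'a" where
  "coord q m b a = (THE c. (\<forall>i<m. c i \<in> Fq q) \<and> (\<forall>i\<ge>m. c i = 0) \<and> a = (\<Sum>i<m. c i * b i))"

definition vec_mat :: "nat \<Rightarrow> nat \<Rightarrow> (nat \<Rightarrow> 'a::{field,finite}) \<Rightarrow> (nat \<Rightarrow> 'a) \<Rightarrow> nat \<Rightarrow> nat \<Rightarrow> 'a" where
  "vec_mat q m b v i j = coord q m b (v i) j"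

definition lin_mat :: "nat \<Rightarrow> nat \<Rightarrow> ('a::{field,finite} \<Rightarrow> 'a) \<Rightarrow> (nat \<Rightarrow> 'a) \<Rightarrow> (nat \<Rightarrow> 'a) \<Rightarrow> nat \<Rightarrow> nat \<Rightarrow> 'a" where
  "lin_mat q m T a b i j = coord q m b (T (a i)) j"

definition qpoly :: "nat \<Rightarrow> nat \<Rightarrow> (nat \<Rightarrow> 'a::{field,finite}) \<Rightarrow> 'a \<Rightarrow> 'a" where
  "qpoly q m f x = (\<Sum>i<m. f i * frob q x i)"

definition is_dual_basis :: "nat \<Rightarrow> nat \<Rightarrow> (nat \<Rightarrow> 'a::{field,finite}) \<Rightarrow> (nat \<Rightarrow> 'a) \<Rightarrow> bool" where
  "is_dual_basis q m a a' \<longleftrightarrow> is_basis q m a' \<and>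
     (\<forall>i<m. \<forall>j<m. trace q m (a i * a' j) = (if i = j then 1 else 0))"

end

theory Submission
  imports Defs
begin

text \<open>Since \<open>[F]_B = [f]_A^B\<close>, the coordinates of \<open>F_j\<close> and \<open>f(\<alpha>^[j])\<close> with
  respect to \<open>B\<close> agree, so \<open>F_j = f(\<alpha>^[j]) = \<Sum>_l f_l (\<alpha>^[j])^[l]\<close>. Substituting into
  \<open>F(x) = \<Sum>_j F_j x^[j]\<close> and exchanging the sums gives \<open>F(x) = \<Sum>_l f_l Tr(\<alpha>^[l] x)\<close>,
  and duality of the bases picks out \<open>f_i\<close> at \<open>x = \<alpha>'_i\<close>.\<close>

lemma coord_spec:
  assumes "is_basis q m b"
  shows "(\<forall>i<m. coord q m b a i \<in> Fq q) \<and> (\<forall>i\<ge>m. coord q m b a i = 0)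
         \<and> a = (\<Sum>i<m. coord q m b a i * b i)"
proof -
  have "\<exists>!c. (\<forall>i<m. c i \<in> Fq q) \<and> (\<forall>i\<ge>m. c i = 0) \<and> a = (\<Sum>i<m. c i * b i)"
    using assms unfolding is_basis_def by blast
  then show ?thesis
    unfolding coord_def by (rule theI')
qed

lemma sum_coord_basis:
  assumes "is_basis q m b"
  shows "(\<Sum>i<m. coord q m b a i * b i) = a"
  using coord_spec[OF assms] by (metis (no_types))

lemma eq_if_coord_eq:
  assumes "is_basis q m b" and "\<forall>j<m. coord q m b x j = coord q m b y j"
  shows "x = y"
  by (metis (no_types, lifting) assms sum_coord_basis lessThan_iff sum.cong)

lemma qpoly_cong:
  assumes "\<And>j. j < m \<Longrightarrow> f j = g j"
  shows "qpoly q m f = qpoly q m g"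
  unfolding qpoly_def using assms by (intro ext sum.cong) auto

lemma frob_frob_mult: "frob q (frob q a j) l * frob q x j = frob q (frob q a l * x) j"
  unfolding frob_def by (simp add: power_mult_distrib power_mult[symmetric] mult.commute)

lemma qpoly_of_qpoly_values:
  "qpoly q m (\<lambda>j. qpoly q m f (frob q \<alpha> j)) x
     = (\<Sum>l<m. f l * trace q m (frob q \<alpha> l * x))"
proof -
  have "qpoly q m (\<lambda>j. qpoly q m f (frob q \<alpha> j)) x
        = (\<Sum>j<m. \<Sum>l<m. f l * (frob q (frob q \<alpha> j) l * frob q x j))"
    unfolding qpoly_def by (simp add: sum_distrib_right mult.assoc)
  also have "\<dots> = (\<Sum>j<m. \<Sum>l<m. f l * frob q (frob q \<alpha> l * x) j)"
    by (simp add: frob_frob_mult)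
  also have "\<dots> = (\<Sum>l<m. f l * trace q m (frob q \<alpha> l * x))"
    unfolding trace_def by (subst sum.swap) (simp add: sum_distrib_left)
  finally show ?thesis .
qed

lemma sum_trace_dual_basis:
  assumes "is_dual_basis q m a a'" and "i < m"
  shows "(\<Sum>l<m. f l * trace q m (a l * a' i)) = f i"
proof -
  have "(\<Sum>l<m. f l * trace q m (a l * a' i)) = (\<Sum>l<m. if l = i then f l else 0)"
    using assms unfolding is_dual_basis_def by (intro sum.cong) auto
  also have "\<dots> = f i"
    using assms(2) by simp
  finally show ?thesis .
qed

theorem lemma2:
  fixes q m :: nat and p k :: nat
    and \<alpha> :: "'a::{field,finite}"
    and \<alpha>' \<B> f F :: "nat \<Rightarrow> 'a"
  assumes "prime p" and "k \<ge> 1" and "q = p ^ k"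
    and "m \<ge> 1"
    and "card (UNIV :: 'a set) = q ^ m"
    and "is_basis q m (frob q \<alpha>)"
    and "is_dual_basis q m (frob q \<alpha>) \<alpha>'"
    and "is_basis q m \<B>"
    and "\<forall>i<m. \<forall>j<m. vec_mat q m \<B> F i j = lin_mat q m (qpoly q m f) (frob q \<alpha>) \<B> i j"
  shows "(\<forall>i<m. f i = qpoly q m F (\<alpha>' i)) \<and>
         (\<forall>\<Theta>. is_basis q m \<Theta> \<longrightarrow>
            (\<forall>i<m. \<forall>j<m. vec_mat q m \<Theta> f i j = lin_mat q m (qpoly q m F) \<alpha>' \<Theta> i j))"
proof -
  have F_eq: "F j = qpoly q m f (frob q \<alpha> j)" if "j < m" for j
    using eq_if_coord_eq[OF assms(8)] assms(9) that unfolding vec_mat_def lin_mat_def by blast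
  have "qpoly q m F = qpoly q m (\<lambda>j. qpoly q m f (frob q \<alpha> j))"
    using F_eq by (rule qpoly_cong)
  then have "f i = qpoly q m F (\<alpha>' i)" if "i < m" for i
    using sum_trace_dual_basis[OF assms(7) that] by (simp add: qpoly_of_qpoly_values)
  then show ?thesis
    unfolding vec_mat_def lin_mat_def by simp
qed

end
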